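(* For every $d\ge1$, $t>0$ and $\epsilon>0$, $r^*_{t,\epsilon,d}\ge r^*_{t,\epsilon,1}$.
   Context: Training points $y_k\boldsymbol e_1\in\mathbb R^d$, $k\in[n]$, $y_k=2(k-1)\Delta-D$, $\Delta=D/(n-1)$. $p_{\mathcal N}(x;\sigma)=(\sqrt{2\pi}\sigma)^{-1}e^{-x^2/(2\sigma^2)}$; $p^{(n,1)}_t(x)=\frac1n\sum_kp_{\mathcal N}(x-y_k;\sqrt t)$; $p^{(n,d)}_t(\boldsymbol x)=p^{(n,1)}_t(x_1)\prod_{i\ge2}p_{\mathcal N}(x_i;\sqrt t)$; $L^{(n,d)}_t[\boldsymbol f]=t\,\mathbb E_{p^{(n,d)}_t}\|\boldsymbol f-\nabla\log p^{(n,d)}_t\|^2$ for measurable $\boldsymbol f:\mathbb R^d\to\mathbb R^d$. Admissible $\boldsymbol f$: every line restriction $h_{\boldsymbol w,\boldsymbol b}(x)=\boldsymbol f(\boldsymbol wx+\boldsymbol b)$ ($\boldsymbol w\in\mathbb S^{d-1}$, $\boldsymbol b\in\mathbb R^d$) is continuous and twice differentiable outside a finite set $N_{\boldsymbol w,\boldsymbol b}$; $R^{(d)}[\boldsymbol f]=\sup_{\boldsymbol w,\boldsymbol b}\sup\{\sum_i\|h'_{\boldsymbol w,\boldsymbol b}(x_{i+1})-h'_{\boldsymbol w,\boldsymbol b}(x_i)\|:x_1<\dots<x_m\in\mathbb R\setminus N_{\boldsymbol w,\boldsymbol b}\}$. $r^*_{t,\epsilon,d}=\inf\{R^{(d)}[\boldsymbol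 f]:\boldsymbol f\text{ admissible},\ L^{(n,d)}_t[\boldsymbol f]<\epsilon\}$. *)

theory Defs
  imports "HOL-Probability.Probability"
begin

definition pN :: "real \<Rightarrow> real \<Rightarrow> real" where
  "pN x \<sigma> = exp (- x\<^sup>2 / (2 * \<sigma>\<^sup>2)) / (sqrt (2 * pi) * \<sigma>)"

definition ypt :: "nat \<Rightarrow> real \<Rightarrow> nat \<Rightarrow> real" where
  "ypt n D k = 2 * (real k - 1) * (D / (real n - 1)) - D"

definition p1 :: "nat \<Rightarrow> real \<Rightarrow> real \<Rightarrow> real \<Rightarrow> real" where
  "p1 n D t x = (1 / real n) * (\<Sum>k = 1..n. pN (x - ypt n D k) (sqrt t))"

text \<open>R^d is real^'d; the index 1 plays the role of the first coordinate (direction e_1).\<close>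
definition pd :: "nat \<Rightarrow> real \<Rightarrow> real \<Rightarrow> real^'d::{finite,one} \<Rightarrow> real" where
  "pd n D t x = p1 n D t (x $ 1) * (\<Prod>i \<in> UNIV - {1}. pN (x $ i) (sqrt t))"

definition grad :: "('a::euclidean_space \<Rightarrow> real) \<Rightarrow> 'a \<Rightarrow> 'a" where
  "grad g x = (SOME v. (g has_derivative (\<lambda>h. v \<bullet> h)) (at x))"

definition Lloss :: "nat \<Rightarrow> real \<Rightarrow> real \<Rightarrow> (real^('d::{finite,one}) \<Rightarrow> real^('d::{finite,one})) \<Rightarrow> ennreal" where
  "Lloss n D t f = ennreal t *
     (\<integral>\<^sup>+ x. ennreal ((norm (f x - grad (\<lambda>y. ln (pd n D t y)) x))\<^sup>2 * pd n D t x) \<partial>lborel)"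

definition line_restr :: "('a::real_normed_vector \<Rightarrow> 'b) \<Rightarrow> 'a \<Rightarrow> 'a \<Rightarrow> real \<Rightarrow> 'b" where
  "line_restr f w b x = f (x *\<^sub>R w + b)"

definition twice_diff_at :: "(real \<Rightarrow> 'b::real_normed_vector) \<Rightarrow> real \<Rightarrow> bool" where
  "twice_diff_at h x \<longleftrightarrow>
     (\<exists>e>0. \<forall>y\<in>ball x e. h differentiable (at y)) \<and>
     (\<lambda>y. vector_derivative h (at y)) differentiable (at x)"

definition bad_set :: "(real \<Rightarrow> 'b::real_normed_vector) \<Rightarrow> real set" where
  "bad_set h = {x. \<not> twice_diff_at h x}"

definition admissible :: "('a::real_normed_vector \<Rightarrow> 'a) \<Rightarrow> bool" where
  "admissible f \<longleftrightarrow> (\<forall>w b. norm w = 1 \<longrightarrow>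
     continuous_on UNIV (line_restr f w b) \<and> finite (bad_set (line_restr f w b)))"

text \<open>Total variation of h' over R \ N (ereal-valued supremum).\<close>
definition var_deriv :: "(real \<Rightarrow> 'b::real_normed_vector) \<Rightarrow> ereal" where
  "var_deriv h = (SUP (m, xs) \<in> {(m, xs). (\<forall>i<m. xs i \<notin> bad_set h) \<and> (\<forall>i. Suc i < m \<longrightarrow> xs i < xs (Suc i))}.
      ereal (\<Sum>i<m - 1. norm (vector_derivative h (at (xs (Suc i))) - vector_derivative h (at (xs i)))))"

definition Rreg :: "('a::real_normed_vector \<Rightarrow> 'a) \<Rightarrow> ereal" where
  "Rreg f = (SUP (w, b) \<in> {(w, b). norm w = 1}. var_deriv (line_restr f w b))"

definition r_star :: "nat \<Rightarrow> real \<Rightarrow> real \<Rightarrow> real \<Rightarrow> 'd::{finite,one} itself \<Rightarrow> ereal" where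
  "r_star n D t \<epsilon> _ = (INF f \<in> {f :: real^('d::{finite,one}) \<Rightarrow> real^('d::{finite,one}). f \<in> borel_measurable borel \<and> admissible f
        \<and> Lloss n D t f < ennreal \<epsilon>}. Rreg f)"

end

theory Submission
  imports Defs
begin

(* Given an admissible f on R^d with L[f] < eps, restrict f to the lines c + R e_1 and keep only
   the first component. Each such slice is admissible on R and, being a line restriction of f
   followed by a linear contraction, has no larger regularity R. Since p_t factors as the
   one-dimensional mixture in x_1 times Gaussians in the other coordinates, the first component
   of its score is the one-dimensional score, and Fubini shows that L[f] dominates the Gaussian
   average over c of the one-dimensional losses of the slices. Hence some slice has loss < eps. *)

lemma pN_pos: "t > 0 \<Longrightarrow> pN z (sqrt t) > 0"
  by (simp add: pN_def)

lemma pN_has_real_derivative: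
  assumes "t > 0"
  shows "((\<lambda>z. pN z (sqrt t)) has_real_derivative pN z (sqrt t) * (- z / t)) (at z)"
proof -
  have "(sqrt t)\<^sup>2 = t" "sqrt t > 0" using assms by simp_all
  then show ?thesis unfolding pN_def using assms
    by (auto intro!: derivative_eq_intros simp: field_simps)
qed

lemma pN_measurable [measurable]: "(\<lambda>x. pN x s) \<in> borel_measurable borel"
  unfolding pN_def by measurable

lemma nn_integral_pN: assumes "t > 0" shows "(\<integral>\<^sup>+ x. ennreal (pN x (sqrt t)) \<partial>lborel) = 1"
proof -
  have pN_eq: "pN x (sqrt t) = normal_density 0 (sqrt t) x" for x
    using assms by (simp add: pN_def normal_density_def real_sqrt_mult field_simps)
  have "(\<integral>\<^sup>+ x. ennreal (normal_density 0 (sqrt t) x) \<partial>lborel) = ennreal (\<integral>x. normal_density 0 (sqrt t) x \<partial>lborel)"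
    using assms by (intro nn_integral_eq_integral integrable_normal_density) auto
  then show ?thesis using assms by (simp add: pN_eq integral_normal_density)
qed

lemma p1_pos: assumes "n \<ge> 1" "t > 0" shows "p1 n D t x > 0"
  unfolding p1_def using assms by (intro mult_pos_pos sum_pos) (auto simp: pN_pos)

lemma p1_measurable [measurable]: "p1 n D t \<in> borel_measurable borel"
  unfolding p1_def[abs_def] by measurable

definition score1 :: "nat \<Rightarrow> real \<Rightarrow> real \<Rightarrow> real \<Rightarrow> real" where
  "score1 n D t x = (\<Sum>k = 1..n. pN (x - ypt n D k) (sqrt t) * ((ypt n D k - x) / t))
                    / (\<Sum>k = 1..n. pN (x - ypt n D k) (sqrt t))"

lemma ln_p1_has_real_derivative:
  assumes "n \<ge> 1" "t > 0"
  shows "((\<lambda>x. ln (p1 n D t x)) has_real_derivative score1 n D t x) (at x)"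
proof -
  have "(p1 n D t has_real_derivative
          (1 / real n) * (\<Sum>k = 1..n. pN (x - ypt n D k) (sqrt t) * ((ypt n D k - x) / t))) (at x)"
    unfolding p1_def[abs_def] using assms(1)
    by (auto intro!: derivative_eq_intros DERIV_chain2[OF pN_has_real_derivative[OF assms(2)]])
  from DERIV_chain2[OF DERIV_ln[OF p1_pos[OF assms]] this] show ?thesis
    using assms by (simp add: score1_def p1_def)
qed

lemma continuous_on_score1: assumes "n \<ge> 1" "t > 0" shows "continuous_on UNIV (score1 n D t)"
proof -
  have "(\<Sum>k = 1..n. pN (x - ypt n D k) (sqrt t)) \<noteq> 0" for x
    using p1_pos[OF assms, of D x] by (auto simp: p1_def)
  then show ?thesis
    unfolding score1_def[abs_def] pN_def by (auto intro!: continuous_intros)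
qed

lemma score1_measurable [measurable]: "n \<ge> 1 \<Longrightarrow> t > 0 \<Longrightarrow> score1 n D t \<in> borel_measurable borel"
  by (rule borel_measurable_continuous_onI[OF continuous_on_score1])

lemma grad_eqI:
  assumes "(g has_derivative (\<lambda>h. v \<bullet> h)) (at x)"
  shows "grad g x = v"
proof -
  have "(g has_derivative (\<lambda>h. grad g x \<bullet> h)) (at x)"
    unfolding grad_def using assms by (rule someI)
  from has_derivative_unique[OF this assms] have "(\<lambda>h. grad g x \<bullet> h) = (\<lambda>h. v \<bullet> h)" .
  then show ?thesis
    by (metis euclidean_eqI inner_commute)
qed

lemma has_derivative_vec_nth_compose:
  assumes "(\<phi> has_real_derivative c) (at (x $ i))"
  shows "((\<lambda>y::real^'n. \<phi> (y $ i)) has_derivative (\<lambda>h. (c *\<^sub>R axis i 1) \<bullet> h)) (at x)"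
  using DERIV_compose_FDERIV[OF assms bounded_linear.has_derivative[OF bounded_linear_vec_nth has_derivative_ident]]
  by (simp add: inner_axis' mult.commute)

lemma ln_pd_eq:
  assumes "n \<ge> 1" "t > 0"
  shows "ln (pd n D t x) = ln (p1 n D t (x $ 1)) + (\<Sum>i\<in>UNIV-{1}. ln (pN (x $ i) (sqrt t)))"
  unfolding pd_def using p1_pos[OF assms] pN_pos[OF assms(2)]
  by (auto simp: ln_mult prod_pos ln_prod less_imp_neq[symmetric])

lemma grad_ln_pd_nth_1:
  fixes x :: "real^'d::{finite,one}"
  assumes "n \<ge> 1" "t > 0"
  shows "grad (\<lambda>y. ln (pd n D t y)) x $ 1 = score1 n D t (x $ 1)"
proof -
  have ln_pN: "((\<lambda>z. ln (pN z (sqrt t))) has_real_derivative - z / t) (at z)" for z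
    using DERIV_chain2[OF DERIV_ln[OF pN_pos[OF assms(2), of z]] pN_has_real_derivative[OF assms(2)]]
      pN_pos[OF assms(2), of z]
    by (simp add: field_simps)
  define v :: "real^'d::{finite,one}" where
    "v = score1 n D t (x $ 1) *\<^sub>R axis 1 1 + (\<Sum>i\<in>UNIV-{1}. (- (x $ i) / t) *\<^sub>R axis i 1)"
  have "((\<lambda>y. ln (pd n D t y)) has_derivative (\<lambda>h. v \<bullet> h)) (at x)"
    unfolding ln_pd_eq[OF assms, abs_def] v_def inner_add_left inner_sum_left
    by (intro has_derivative_add has_derivative_sum has_derivative_vec_nth_compose
        ln_p1_has_real_derivative[OF assms] ln_pN)
  then have "grad (\<lambda>y. ln (pd n D t y)) x = v" by (rule grad_eqI)
  then show ?thesis by (simp add: v_def axis_def)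
qed

lemma vector_derivative_bounded_linear_compose:
  assumes "bounded_linear K" "h differentiable (at y)"
  shows "((\<lambda>x. K (h x)) has_vector_derivative K (vector_derivative h (at y))) (at y)"
  using bounded_linear.has_vector_derivative[OF assms(1)] assms(2) vector_derivative_works by blast

lemma twice_diff_at_imp_differentiable: "twice_diff_at h x \<Longrightarrow> h differentiable (at x)"
  unfolding twice_diff_at_def by auto

lemma twice_diff_at_bounded_linear_compose:
  assumes K: "bounded_linear K" and "twice_diff_at h x"
  shows "twice_diff_at (\<lambda>x. K (h x)) x"
proof -
  from assms(2) obtain e where e: "e > 0" "\<forall>y\<in>ball x e. h differentiable (at y)"
    and h'_diff: "(\<lambda>y. vector_derivative h (at y)) differentiable (at x)"
    unfolding twice_diff_at_def by blast
  have "\<forall>y\<in>ball x e. (\<lambda>x. K (h x)) differentiable (at y)"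
    using vector_derivative_bounded_linear_compose[OF K] e(2) differentiableI_vector by blast
  moreover have "(\<lambda>y. K (vector_derivative h (at y))) differentiable (at x)"
    using differentiable_compose[OF bounded_linear_imp_differentiable[OF K] h'_diff] by (simp add: o_def)
  then have "(\<lambda>y. vector_derivative (\<lambda>x. K (h x)) (at y)) differentiable (at x)"
    by (rule differentiable_transform_within[where d=e and s=UNIV, OF _ e(1)])
       (use vector_derivative_at[OF vector_derivative_bounded_linear_compose[OF K]] e(2)
         in \<open>auto simp: dist_commute\<close>)
  ultimately show ?thesis unfolding twice_diff_at_def using e(1) by blast
qed

lemma bad_set_bounded_linear_compose:
  "bounded_linear K \<Longrightarrow> bad_set (\<lambda>x. K (h x)) \<subseteq> bad_set h"
  unfolding bad_set_def using twice_diff_at_bounded_linear_compose by blast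

lemma eventually_shifts_notin_finite:
  fixes xs :: "nat \<Rightarrow> real"
  assumes "finite S"
  shows "eventually (\<lambda>k. \<forall>i\<in>{..<m}. xs i + inverse (real (Suc k)) \<notin> S) sequentially"
proof -
  have "eventually (\<lambda>k. xs i + inverse (real (Suc k)) \<notin> S) sequentially" for i
  proof -
    have "inj (\<lambda>k. xs i + inverse (real (Suc k)))"
      by (auto simp: inj_def)
    then have "finite {k. xs i + inverse (real (Suc k)) \<in> S}"
      using finite_vimageI[OF assms] by (simp add: vimage_def)
    then show ?thesis
      by (simp add: cofinite_eq_sequentially[symmetric] eventually_cofinite)
  qed
  then show ?thesis
    by (intro eventually_ball_finite) auto
qed

lemma derivative_variation_sum_le_var_deriv:
  assumes K: "bounded_linear K" and K_le: "\<And>u. norm (K u) \<le> norm u"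
    and good: "\<forall>i<m. xs i \<notin> bad_set h" and incr: "\<forall>i. Suc i < m \<longrightarrow> xs i < xs (Suc i)"
  shows "ereal (\<Sum>i<m - 1. norm (vector_derivative (\<lambda>x. K (h x)) (at (xs (Suc i)))
                              - vector_derivative (\<lambda>x. K (h x)) (at (xs i)))) \<le> var_deriv h"
proof -
  define h' where "h' = (\<lambda>y. vector_derivative h (at y))"
  have K_h'_eq: "vector_derivative (\<lambda>x. K (h x)) (at (xs i)) = K (h' (xs i))" if "i < m" for i
  proof -
    have "h differentiable (at (xs i))"
      using good that unfolding bad_set_def by (auto intro: twice_diff_at_imp_differentiable)
    then show ?thesis
      unfolding h'_def by (rule vector_derivative_at[OF vector_derivative_bounded_linear_compose[OF K]])
  qed
  have "(\<Sum>i<m - 1. norm (vector_derivative (\<lambda>x. K (h x)) (at (xs (Suc i)))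
                        - vector_derivative (\<lambda>x. K (h x)) (at (xs i))))
        \<le> (\<Sum>i<m - 1. norm (h' (xs (Suc i)) - h' (xs i)))"
  proof (rule sum_mono)
    fix i assume "i \<in> {..<m - 1}"
    then have "vector_derivative (\<lambda>x. K (h x)) (at (xs (Suc i))) - vector_derivative (\<lambda>x. K (h x)) (at (xs i))
               = K (h' (xs (Suc i)) - h' (xs i))"
      using K_h'_eq linear_diff[OF bounded_linear.linear[OF K]] by simp
    then show "norm (vector_derivative (\<lambda>x. K (h x)) (at (xs (Suc i))) - vector_derivative (\<lambda>x. K (h x)) (at (xs i)))
               \<le> norm (h' (xs (Suc i)) - h' (xs i))"
      using K_le by simp
  qed
  also have "ereal \<dots> \<le> var_deriv h"
    unfolding var_deriv_def h'_def by (rule SUP_upper2[of "(m, xs)"]) (use good incr in auto)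
  finally show ?thesis by simp
qed

lemma var_deriv_bounded_linear_compose_le:
  assumes K: "bounded_linear K" and K_le: "\<And>u. norm (K u) \<le> norm u"
    and fin: "finite (bad_set h)"
  shows "var_deriv (\<lambda>x. K (h x)) \<le> var_deriv h"
  unfolding var_deriv_def[of "\<lambda>x. K (h x)"]
proof (rule SUP_least, clarify)
  fix m and xs :: "nat \<Rightarrow> real"
  assume good: "\<forall>i<m. xs i \<notin> bad_set (\<lambda>x. K (h x))"
    and incr: "\<forall>i. Suc i < m \<longrightarrow> xs i < xs (Suc i)"
  define g' where "g' = (\<lambda>y. vector_derivative (\<lambda>x. K (h x)) (at y))"
  define V where "V = (\<lambda>xs. \<Sum>i<m - 1. norm (g' (xs (Suc i)) - g' (xs i)))"
  \<comment> \<open>The sample points may lie in bad_set h. Shift them by 1/(k+1) to good points of h and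
      let k tend to infinity: the derivative of K \<circ> h is continuous at the original points.\<close>
  define z where "z = (\<lambda>k i. xs i + inverse (real (Suc k)))"
  have V_shift_le: "ereal (V (z k)) \<le> var_deriv h" if "\<forall>i\<in>{..<m}. z k i \<notin> bad_set h" for k
    unfolding V_def g'_def using that incr
    by (intro derivative_variation_sum_le_var_deriv[OF K K_le]) (auto simp: z_def)
  have g'_cont: "isCont g' (xs i)" if "i < m" for i
  proof -
    have "twice_diff_at (\<lambda>x. K (h x)) (xs i)" using good that unfolding bad_set_def by auto
    then show ?thesis
      unfolding twice_diff_at_def g'_def by (auto intro: differentiable_imp_continuous_within)
  qed
  have z_tendsto: "(\<lambda>k. z k i) \<longlonglongrightarrow> xs i" for i
    unfolding z_def using tendsto_add[OF tendsto_const LIMSEQ_inverse_real_of_nat] by simp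
  have "(\<lambda>k. V (z k)) \<longlonglongrightarrow> V xs"
    unfolding V_def
    by (intro tendsto_sum tendsto_norm tendsto_diff isCont_tendsto_compose[OF g'_cont z_tendsto]) auto
  then have "ereal (V xs) \<le> var_deriv h"
    by (intro tendsto_upperbound[OF tendsto_ereal])
       (use eventually_mono[OF eventually_shifts_notin_finite[OF fin] V_shift_le] in \<open>auto simp: z_def\<close>)
  then show "ereal (\<Sum>i<m - 1. norm (vector_derivative (\<lambda>x. K (h x)) (at (xs (Suc i)))
                                  - vector_derivative (\<lambda>x. K (h x)) (at (xs i)))) \<le> var_deriv h"
    by (simp add: V_def g'_def)
qed

definition slice :: "(real^'d::{finite,one} \<Rightarrow> real^'d::{finite,one}) \<Rightarrow> real^'d::{finite,one} \<Rightarrow> real^1 \<Rightarrow> real^1" where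
  "slice f c u = vec (f ((u $ 1) *\<^sub>R axis 1 1 + c) $ 1)"

lemma norm_vec_nth_1_le: "norm (vec (v $ 1) :: real^1) \<le> norm v"
  by (simp add: norm_vector_1 component_le_norm_cart)

lemma bounded_linear_vec_nth_1: "bounded_linear (\<lambda>v. vec (v $ 1) :: real^1)"
  by (rule bounded_linear_intro[where K=1]) (auto simp: vec_eq_iff norm_vec_nth_1_le)

lemma norm_scaleR_axis_1:
  "norm (w :: real^1) = 1 \<Longrightarrow> norm ((w $ 1) *\<^sub>R axis (1::'d::{finite,one}) (1::real)) = 1"
  by (simp add: norm_vector_1)

lemma line_restr_slice:
  "line_restr (slice f c) w b =
     (\<lambda>x. vec (line_restr f ((w $ 1) *\<^sub>R axis 1 1) ((b $ 1) *\<^sub>R axis 1 1 + c) x $ 1))"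
  by (auto simp: fun_eq_iff line_restr_def slice_def algebra_simps)

lemma admissible_slice: assumes "admissible f" shows "admissible (slice f c)"
  unfolding admissible_def
proof (intro allI impI conjI)
  fix w b :: "real^1" assume "norm w = 1"
  let ?h = "line_restr f ((w $ 1) *\<^sub>R axis 1 1) ((b $ 1) *\<^sub>R axis 1 1 + c)"
  have h: "continuous_on UNIV ?h" "finite (bad_set ?h)"
    using assms norm_scaleR_axis_1[OF \<open>norm w = 1\<close>] unfolding admissible_def by blast+
  show "continuous_on UNIV (line_restr (slice f c) w b)"
    unfolding line_restr_slice
    by (rule continuous_on_compose2[OF linear_continuous_on[OF bounded_linear_vec_nth_1] h(1)]) auto
  show "finite (bad_set (line_restr (slice f c) w b))"
    unfolding line_restr_slice
    by (rule finite_subset[OF bad_set_bounded_linear_compose[OF bounded_linear_vec_nth_1] h(2)])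
qed

lemma Rreg_slice_le: assumes "admissible f" shows "Rreg (slice f c) \<le> Rreg f"
  unfolding Rreg_def[of "slice f c"]
proof (rule SUP_least, clarify)
  fix w b :: "real^1" assume "norm w = 1"
  let ?w = "(w $ 1) *\<^sub>R axis (1::'d::{finite,one}) (1::real)" and ?b = "(b $ 1) *\<^sub>R axis 1 1 + c"
  have w: "norm ?w = 1" by (rule norm_scaleR_axis_1[OF \<open>norm w = 1\<close>])
  have "var_deriv (line_restr (slice f c) w b) \<le> var_deriv (line_restr f ?w ?b)"
    unfolding line_restr_slice using assms w unfolding admissible_def
    by (intro var_deriv_bounded_linear_compose_le[OF bounded_linear_vec_nth_1 norm_vec_nth_1_le]) blast
  also have "\<dots> \<le> Rreg f"
    unfolding Rreg_def by (rule SUP_upper2[of "(?w, ?b)"]) (use w in auto)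
  finally show "var_deriv (line_restr (slice f c) w b) \<le> Rreg f" .
qed

lemma vec_nth_measurable [measurable]: "(\<lambda>v::real^'n. v $ i) \<in> borel_measurable borel"
  by (rule borel_measurable_continuous_onI[OF linear_continuous_on[OF bounded_linear_vec_nth]])

lemma slice_measurable:
  assumes [measurable]: "f \<in> borel_measurable borel"
  shows "slice f c \<in> borel_measurable borel"
proof -
  have [measurable]: "(\<lambda>v. vec (v $ 1) :: real^1) \<in> borel_measurable (borel :: (real^'d::{finite,one}) measure)"
    by (rule borel_measurable_continuous_onI[OF linear_continuous_on[OF bounded_linear_vec_nth_1]])
  show ?thesis unfolding slice_def[abs_def] by measurable
qed

lemma nn_integral_lborel_vec1:
  assumes [measurable]: "\<phi> \<in> borel_measurable borel"
  shows "(\<integral>\<^sup>+ u. \<phi> ((u::real^1) $ 1) \<partial>lborel) = (\<integral>\<^sup>+ x. \<phi> x \<partial>lborel)"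
proof -
  have Basis_eq: "(Basis :: (real^1) set) = {axis 1 1}"
    by (auto simp: Basis_vec_def)
  have "(\<integral>\<^sup>+ x. (\<Prod>b\<in>(Basis :: (real^1) set). \<phi> (x \<bullet> b)) \<partial>lborel)
      = (\<Prod>b\<in>(Basis :: (real^1) set). \<integral>\<^sup>+ x. \<phi> x \<partial>lborel)"
    by (rule nn_integral_lborel_prod) auto
  then show ?thesis by (simp add: Basis_eq inner_axis)
qed

lemma Lloss_slice:
  assumes n: "n \<ge> 1" and t: "t > 0" and [measurable]: "f \<in> borel_measurable borel"
  shows "Lloss n D t (slice f c) = ennreal t *
    (\<integral>\<^sup>+ y. ennreal ((f (y *\<^sub>R axis 1 1 + c) $ 1 - score1 n D t y)\<^sup>2 * p1 n D t y) \<partial>lborel)"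
proof -
  note score1_measurable[OF n t, measurable]
  have "UNIV - {1::1} = {}" by auto
  then have "(norm (slice f c u - grad (\<lambda>y. ln (pd n D t y)) u))\<^sup>2 * pd n D t u
      = (f ((u $ 1) *\<^sub>R axis 1 1 + c) $ 1 - score1 n D t (u $ 1))\<^sup>2 * p1 n D t (u $ 1)" for u :: "real^1"
    by (simp add: norm_vector_1 grad_ln_pd_nth_1[OF n t] slice_def power2_abs) (simp add: pd_def)
  then show ?thesis
    unfolding Lloss_def by (subst nn_integral_lborel_vec1[symmetric]) simp_all
qed

lemma sum_Basis_fun_upd:
  fixes w :: "'a::euclidean_space \<Rightarrow> real"
  assumes "e \<in> Basis"
  shows "(\<Sum>b\<in>Basis. (w(e := y)) b *\<^sub>R b) = y *\<^sub>R e + (\<Sum>b\<in>Basis - {e}. w b *\<^sub>R b)"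
  using assms by (simp add: sum.remove[of Basis e])

lemma nn_integral_lborel_split_Basis:
  fixes q :: "'a::euclidean_space \<Rightarrow> ennreal"
  assumes e: "e \<in> Basis" and [measurable]: "q \<in> borel_measurable borel"
  shows "(\<integral>\<^sup>+ x. q x \<partial>lborel) = (\<integral>\<^sup>+ w. (\<integral>\<^sup>+ y. q (y *\<^sub>R e + (\<Sum>b\<in>Basis - {e}. w b *\<^sub>R b)) \<partial>lborel)
                                     \<partial>(\<Pi>\<^sub>M b\<in>Basis - {e}. lborel))"
proof -
  interpret product_sigma_finite "\<lambda>_::'a. lborel :: real measure" by standard
  have [measurable]: "(\<lambda>w. q (\<Sum>b\<in>Basis. w b *\<^sub>R b)) \<in> borel_measurable (\<Pi>\<^sub>M b\<in>Basis. lborel)"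
    by measurable
  have "(\<integral>\<^sup>+ x. q x \<partial>lborel) = (\<integral>\<^sup>+ w. q (\<Sum>b\<in>Basis. w b *\<^sub>R b) \<partial>(\<Pi>\<^sub>M b\<in>Basis. lborel))"
    by (subst lborel_eq) (simp add: nn_integral_distr)
  also have "\<dots> = (\<integral>\<^sup>+ w. (\<integral>\<^sup>+ y. q (\<Sum>b\<in>Basis. (w(e := y)) b *\<^sub>R b) \<partial>lborel)
                        \<partial>(\<Pi>\<^sub>M b\<in>Basis - {e}. lborel))"
    using product_nn_integral_insert[of "Basis - {e}" e "\<lambda>w. q (\<Sum>b\<in>Basis. w b *\<^sub>R b)"] e
    by (simp add: insert_absorb)
  finally show ?thesis by (simp only: sum_Basis_fun_upd[OF e])
qed

lemma nn_integral_prod_pN: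
  assumes "t > 0" "finite I"
  shows "(\<integral>\<^sup>+ w. ennreal (\<Prod>b\<in>I. pN (w b) (sqrt t)) \<partial>(\<Pi>\<^sub>M b\<in>I. lborel)) = 1"
proof -
  interpret product_sigma_finite "\<lambda>_::'a. lborel :: real measure" by standard
  have "(\<integral>\<^sup>+ w. ennreal (\<Prod>b\<in>I. pN (w b) (sqrt t)) \<partial>(\<Pi>\<^sub>M b\<in>I. lborel))
      = (\<integral>\<^sup>+ w. (\<Prod>b\<in>I. ennreal (pN (w b) (sqrt t))) \<partial>(\<Pi>\<^sub>M b\<in>I. lborel))"
    using assms(1) by (intro nn_integral_cong) (simp add: prod_ennreal less_imp_le pN_pos)
  also have "\<dots> = (\<Prod>b\<in>I. \<integral>\<^sup>+ x. ennreal (pN x (sqrt t)) \<partial>lborel)"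
    by (rule product_nn_integral_prod[OF assms(2)]) measurable
  finally show ?thesis using nn_integral_pN[OF assms(1)] by simp
qed

lemma vec_nth_sum_Basis: "(\<Sum>b\<in>Basis. w b *\<^sub>R b :: real^'n) $ i = w (axis i 1)"
proof -
  have "(\<Sum>b\<in>Basis. w b *\<^sub>R b :: real^'n) $ i = (\<Sum>b\<in>Basis. w b *\<^sub>R b :: real^'n) \<bullet> axis i 1"
    by (simp add: inner_axis)
  also have "\<dots> = (\<Sum>b\<in>Basis. w b * (b \<bullet> axis i (1::real)))"
    by (simp add: inner_sum_left)
  also have "\<dots> = w (axis i 1)"
    by (subst sum.mono_neutral_right[of Basis "{axis i 1}"])
       (auto simp: inner_Basis Basis_vec_def axis_eq_axis)
  finally show ?thesis .
qed

lemma axis_one_in_Basis: "axis i (1::real) \<in> Basis"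
  by simp

lemma vec_nth_axis_1_plus_sum_Basis:
  fixes w :: "real^'n::{finite,one} \<Rightarrow> real"
  shows "(y *\<^sub>R axis 1 1 + (\<Sum>b\<in>Basis - {axis 1 1}. w b *\<^sub>R b)) $ i = (if i = 1 then y else w (axis i 1))"
  unfolding sum_Basis_fun_upd[OF axis_one_in_Basis, symmetric] vec_nth_sum_Basis
  by (simp add: axis_eq_axis)

lemma pd_axis_1_plus_sum_Basis:
  fixes w :: "real^'d::{finite,one} \<Rightarrow> real"
  shows "pd n D t (y *\<^sub>R axis 1 1 + (\<Sum>b\<in>Basis - {axis 1 1}. w b *\<^sub>R b))
       = p1 n D t y * (\<Prod>b\<in>Basis - {axis 1 1}. pN (w b) (sqrt t))"
proof -
  have Basis_eq: "(Basis :: (real^'d::{finite,one}) set) = range (\<lambda>i. axis i 1)"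
    by (auto simp: Basis_vec_def)
  have "Basis - {axis 1 1} = (\<lambda>i. axis i (1::real)) ` (UNIV - {1::'d::{finite,one}})"
    unfolding Basis_eq by (auto simp: axis_eq_axis)
  moreover have "inj_on (\<lambda>i. axis i (1::real)) (UNIV - {1::'d::{finite,one}})"
    by (auto simp: inj_on_def axis_eq_axis)
  ultimately have "(\<Prod>b\<in>Basis - {axis 1 1}. pN (w b) (sqrt t)) = (\<Prod>i\<in>UNIV - {1}. pN (w (axis i 1)) (sqrt t))"
    by (simp add: prod.reindex)
  then show ?thesis
    unfolding pd_def vec_nth_axis_1_plus_sum_Basis by (auto intro!: prod.cong)
qed

lemma pd_nonneg: "n \<ge> 1 \<Longrightarrow> t > 0 \<Longrightarrow> pd n D t x \<ge> 0"
  by (simp add: pd_def p1_pos pN_pos prod_nonneg less_imp_le)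

lemma pd_measurable [measurable]:
  "n \<ge> 1 \<Longrightarrow> t > 0 \<Longrightarrow> pd n D t \<in> borel_measurable (borel :: (real^'d::{finite,one}) measure)"
  unfolding pd_def[abs_def] by measurable

lemma Lloss_ge_nth_1:
  fixes f :: "real^'d::{finite,one} \<Rightarrow> real^'d::{finite,one}"
  assumes "n \<ge> 1" "t > 0"
  shows "ennreal t * (\<integral>\<^sup>+ x. ennreal ((f x $ 1 - score1 n D t (x $ 1))\<^sup>2 * pd n D t x) \<partial>lborel)
         \<le> Lloss n D t f"
  unfolding Lloss_def
proof (intro mult_left_mono nn_integral_mono ennreal_leI mult_right_mono pd_nonneg[OF assms])
  fix x
  have "(f x $ 1 - score1 n D t (x $ 1))\<^sup>2 = \<bar>(f x - grad (\<lambda>y. ln (pd n D t y)) x) $ 1\<bar>\<^sup>2"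
    by (simp add: grad_ln_pd_nth_1[OF assms])
  also have "\<dots> \<le> (norm (f x - grad (\<lambda>y. ln (pd n D t y)) x))\<^sup>2"
    by (rule power_mono[OF component_le_norm_cart]) simp
  finally show "(f x $ 1 - score1 n D t (x $ 1))\<^sup>2 \<le> (norm (f x - grad (\<lambda>y. ln (pd n D t y)) x))\<^sup>2" .
qed simp

lemma Lloss_ge_if_slices_ge:
  fixes f :: "real^'d::{finite,one} \<Rightarrow> real^'d::{finite,one}" and \<epsilon> :: ennreal
  assumes n: "n \<ge> 1" and t: "t > 0" and fm [measurable]: "f \<in> borel_measurable borel"
    and slices: "\<And>c. \<epsilon> \<le> Lloss n D t (slice f c)"
  shows "\<epsilon> \<le> Lloss n D t f"
proof -
  note score1_measurable[OF n t, measurable] pd_measurable[OF n t, measurable]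
  define B :: "(real^'d::{finite,one}) set" where "B = Basis - {axis 1 1}"
  define c where "c = (\<lambda>w. \<Sum>b\<in>B. w b *\<^sub>R b)"
  define W where "W = (\<lambda>w. \<Prod>b\<in>B. pN (w b) (sqrt t))"
  define a where "a = (\<lambda>c y. ennreal ((f (y *\<^sub>R axis 1 1 + c) $ 1 - score1 n D t y)\<^sup>2 * p1 n D t y))"
  define q where "q = (\<lambda>x. ennreal ((f x $ 1 - score1 n D t (x $ 1))\<^sup>2 * pd n D t x))"
  have [measurable]: "q \<in> borel_measurable borel"
    unfolding q_def by measurable
  have q_split: "q (y *\<^sub>R axis 1 1 + c w) = a (c w) y * ennreal (W w)" for w y
  proof -
    have "W w \<ge> 0" unfolding W_def using t by (simp add: prod_nonneg less_imp_le pN_pos)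
    then show ?thesis
      unfolding q_def a_def c_def W_def B_def pd_axis_1_plus_sum_Basis vec_nth_axis_1_plus_sum_Basis
      by (simp add: ennreal_mult'' flip: mult.assoc)
  qed
  have slice_bound: "\<epsilon> \<le> ennreal t * (\<integral>\<^sup>+ y. a c' y \<partial>lborel)" for c'
    using slices[of c'] Lloss_slice[OF n t fm, of D c'] by (simp add: a_def)
  have "\<epsilon> = (\<integral>\<^sup>+ w. \<epsilon> * ennreal (W w) \<partial>(\<Pi>\<^sub>M b\<in>B. lborel))"
    by (subst nn_integral_cmult) (auto simp: W_def B_def nn_integral_prod_pN[OF t])
  also have "\<dots> \<le> (\<integral>\<^sup>+ w. ennreal t * (\<integral>\<^sup>+ y. a (c w) y \<partial>lborel) * ennreal (W w) \<partial>(\<Pi>\<^sub>M b\<in>B. lborel))"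
    by (intro nn_integral_mono mult_right_mono slice_bound) simp
  also have "\<dots> = (\<integral>\<^sup>+ w. ennreal t * (\<integral>\<^sup>+ y. q (y *\<^sub>R axis 1 1 + c w) \<partial>lborel) \<partial>(\<Pi>\<^sub>M b\<in>B. lborel))"
    unfolding q_split by (simp add: nn_integral_multc a_def mult.assoc)
  also have "\<dots> = ennreal t * (\<integral>\<^sup>+ w. (\<integral>\<^sup>+ y. q (y *\<^sub>R axis 1 1 + c w) \<partial>lborel) \<partial>(\<Pi>\<^sub>M b\<in>B. lborel))"
    unfolding c_def by (rule nn_integral_cmult) measurable
  also have "\<dots> = ennreal t * (\<integral>\<^sup>+ x. q x \<partial>lborel)"
    using nn_integral_lborel_split_Basis[OF axis_one_in_Basis, of q] by (simp add: B_def c_def)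
  also have "\<dots> \<le> Lloss n D t f"
    unfolding q_def by (rule Lloss_ge_nth_1[OF n t])
  finally show ?thesis .
qed

theorem mainTheorem10:
  fixes n :: nat and D t \<epsilon> :: real
  assumes "n \<ge> 2" and "D > 0" and "t > 0" and "\<epsilon> > 0"
  shows "r_star n D t \<epsilon> TYPE('d::{finite,one}) \<ge> r_star n D t \<epsilon> TYPE(1)"
  unfolding r_star_def
proof (rule INF_greatest, clarify)
  fix f :: "real^'d::{finite,one} \<Rightarrow> real^'d::{finite,one}"
  assume fm: "f \<in> borel_measurable borel" and adm: "admissible f" and L: "Lloss n D t f < ennreal \<epsilon>"
  have n: "n \<ge> 1" using assms(1) by simp
  obtain c where c: "Lloss n D t (slice f c) < ennreal \<epsilon>"
    using Lloss_ge_if_slices_ge[OF n assms(3) fm, of "ennreal \<epsilon>"] L by (meson not_le)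
  have "(INF g \<in> {g :: real^1 \<Rightarrow> real^1. g \<in> borel_measurable borel \<and> admissible g
                    \<and> Lloss n D t g < ennreal \<epsilon>}. Rreg g) \<le> Rreg (slice f c)"
    by (rule INF_lower) (use slice_measurable[OF fm] admissible_slice[OF adm] c in auto)
  also have "\<dots> \<le> Rreg f" by (rule Rreg_slice_le[OF adm])
  finally show "(INF g \<in> {g :: real^1 \<Rightarrow> real^1. g \<in> borel_measurable borel \<and> admissible g
                    \<and> Lloss n D t g < ennreal \<epsilon>}. Rreg g) \<le> Rreg f" .
qed

end
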